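(* For any $S\subseteq V$ and any $S$-restricted tree cover $\mathcal{T}(S)$ of $G$, the number of vertices of $V$ that have pseudo-degree greater than $s$ in some tree of $\mathcal{T}(S)$ is at most $\frac{|S|}{2d^{c+1}}$, i.e. $|\mathrm{Hi}(\mathcal{T}(S))|\le \frac{|S|}{2d^{c+1}}$.
   Context: $G=(V,E)$ is an undirected graph with $n\ge 3$ vertices and positive real edge weights; $\delta(u,v)$ denotes the distance in $G$. Let $k=\ln n$. For $S\subseteq V$, an $S$-restricted tree cover of $G$ is a family $\{T(w):w\in S\}$ of trees, where $T(w)$ is a subtree of $G$ (with $G$'s edge weights) rooted at $w$, such that: (i) for every $u\in S$, $v\in V$ there is $w\in S$ with $u,v\in V(T(w))$ and $\mathrm{dep}_{T(w)}(u)+\mathrm{dep}_{T(w)}(v)\le(2k-1)\delta(u,v)$, where $\mathrm{dep}_T(x)$ is the weighted distance in $T$ from $x$ to the root; (ii) every vertex of $V$ lies in at most $kn^{1/k}(\ln n+1)\ (\le 2e\ln^2 n)$ trees of the family. For a tree $T$ of the family, a vertex $v\in V(T)$ is a trunk vertex if there are $u,w\in S$ such that $v$ lies on the path from $u$ to $w$ in $T$; $\mathrm{Trunk}(T)$ is the subtree of $T$ induced by its trunk vertices; the pseudo-degree $\mathrm{pdeg}_T(v)$ of $v\in V(T)$ is its degree in $\mathrm{Trunk}(T)$ (and $0$ if $v$ is not a trunk vertex). Fix an integer $d\ge 2$ and a constant $c\ge 1$, and let $s=4e\cdot d^{c+1}\ln^2 n+1$. $\mathrm{Hi}(\mathcal{T}(S))$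 is the set of vertices of $V$ having pseudo-degree $>s$ in some tree of $\mathcal{T}(S)$. *)

theory Defs
  imports Complex_Main
begin

definition wgraph :: "'a set \<Rightarrow> 'a set set \<Rightarrow> ('a set \<Rightarrow> real) \<Rightarrow> bool" where
  "wgraph V E w \<longleftrightarrow> finite V \<and> (\<forall>e\<in>E. e \<subseteq> V \<and> card e = 2 \<and> w e > 0)"

definition walk :: "'a set set \<Rightarrow> 'a list \<Rightarrow> bool" where
  "walk F xs \<longleftrightarrow> xs \<noteq> [] \<and> (\<forall>i. Suc i < length xs \<longrightarrow> {xs ! i, xs ! Suc i} \<in> F)"

definition walk_weight :: "('a set \<Rightarrow> real) \<Rightarrow> 'a list \<Rightarrow> real" where
  "walk_weight w xs = (\<Sum>i<length xs - 1. w {xs ! i, xs ! Suc i})"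

definition wdist :: "'a set set \<Rightarrow> ('a set \<Rightarrow> real) \<Rightarrow> 'a \<Rightarrow> 'a \<Rightarrow> real" where
  "wdist F w x y = Inf {walk_weight w xs | xs. walk F xs \<and> hd xs = x \<and> last xs = y}"

definition connected_on :: "'a set \<Rightarrow> 'a set set \<Rightarrow> bool" where
  "connected_on V F \<longleftrightarrow> (\<forall>x\<in>V. \<forall>y\<in>V. \<exists>xs. walk F xs \<and> hd xs = x \<and> last xs = y)"

definition has_cycle :: "'a set set \<Rightarrow> bool" where
  "has_cycle F \<longleftrightarrow> (\<exists>xs. walk F xs \<and> distinct xs \<and> length xs \<ge> 3 \<and> {last xs, hd xs} \<in> F)"

definition subtree_of :: "'a set \<Rightarrow> 'a set set \<Rightarrow> 'a set \<times> 'a set set \<Rightarrow> bool" where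
  "subtree_of V E T \<longleftrightarrow> fst T \<subseteq> V \<and> snd T \<subseteq> E \<and> (\<forall>e\<in>snd T. e \<subseteq> fst T)
     \<and> connected_on (fst T) (snd T) \<and> \<not> has_cycle (snd T)"

definition dep :: "('a set \<Rightarrow> real) \<Rightarrow> 'a set \<times> 'a set set \<Rightarrow> 'a \<Rightarrow> 'a \<Rightarrow> real" where
  "dep w T r x = wdist (snd T) w x r"

definition restricted_tree_cover ::
  "'a set \<Rightarrow> 'a set set \<Rightarrow> ('a set \<Rightarrow> real) \<Rightarrow> 'a set \<Rightarrow> ('a \<Rightarrow> 'a set \<times> 'a set set) \<Rightarrow> bool" where
  "restricted_tree_cover V E w S T \<longleftrightarrow>
     (let n = real (card V); k = ln n in
       (\<forall>r\<in>S. subtree_of V E (T r) \<and> r \<in> fst (T r)) \<and>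
       (\<forall>u\<in>S. \<forall>v\<in>V. \<exists>r\<in>S. u \<in> fst (T r) \<and> v \<in> fst (T r) \<and>
            dep w (T r) r u + dep w (T r) r v \<le> (2 * k - 1) * wdist E w u v) \<and>
       (\<forall>v\<in>V. real (card {r\<in>S. v \<in> fst (T r)}) \<le> k * n powr (1 / k) * (ln n + 1)))"

definition trunk :: "'a set \<Rightarrow> 'a set \<times> 'a set set \<Rightarrow> 'a set" where
  "trunk S T = {v. \<exists>u\<in>S. \<exists>x\<in>S. u \<in> fst T \<and> x \<in> fst T \<and>
       (\<exists>xs. walk (snd T) xs \<and> distinct xs \<and> hd xs = u \<and> last xs = x \<and> v \<in> set xs)}"

text \<open>Pseudo-degree: degree in the subtree of T induced by the trunk vertices
  (automatically 0 for non-trunk vertices).\<close>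
definition pdeg :: "'a set \<Rightarrow> 'a set \<times> 'a set set \<Rightarrow> 'a \<Rightarrow> nat" where
  "pdeg S T v = card {e\<in>snd T. v \<in> e \<and> e \<subseteq> trunk S T}"

definition Hi :: "'a set \<Rightarrow> 'a set \<Rightarrow> ('a \<Rightarrow> 'a set \<times> 'a set set) \<Rightarrow> real \<Rightarrow> 'a set" where
  "Hi V S T s = {v\<in>V. \<exists>r\<in>S. real (pdeg S (T r) v) > s}"

end

theory Submission
  imports Defs "HOL-Analysis.Complex_Transcendental"
begin

text \<open>
  The trunk edges of a tree T(r) form a forest whose leaves lie in S, because a vertex
  in the interior of a tree path carries two edges of that path. A forest has no more edges
  than vertices, so the sum of deg v - 2 over its vertices is at most 0; the leaves
  contribute -1 each, hence at most |S \<inter> T(r)| / (s - 2) vertices have pseudo-degree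
  greater than s > 2 in T(r). Summing over r and counting the pairs (u, r) with
  u \<in> S \<inter> T(r) from the side of u, the load bound k n^(1/k) (k + 1) = k e (k + 1) of
  the cover gives |Hi| (s - 2) \<le> |S| k e (k + 1), and s - 2 \<ge> 2 d^(c+1) k e (k + 1)
  since k = ln n \<ge> ln 3 > 1 + 1/16.
\<close>

definition deg :: "'a set set \<Rightarrow> 'a \<Rightarrow> nat" where
  "deg F v = card {e\<in>F. v \<in> e}"

lemma walk_mono: "walk F xs \<Longrightarrow> F \<subseteq> G \<Longrightarrow> walk G xs"
  unfolding walk_def by blast

lemma has_cycle_mono: "has_cycle F \<Longrightarrow> F \<subseteq> G \<Longrightarrow> has_cycle G"
  unfolding has_cycle_def using walk_mono by blast

lemma walk_take: "walk F xs \<Longrightarrow> 0 < j \<Longrightarrow> walk F (take j xs)"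
  unfolding walk_def by auto

lemma walk_Cons: "walk F xs \<Longrightarrow> {y, hd xs} \<in> F \<Longrightarrow> walk F (y # xs)"
  unfolding walk_def by (auto simp: nth_Cons' hd_conv_nth) (metis Suc_pred)

lemma set_walk_subset_Union:
  assumes "walk F xs" "2 \<le> length xs"
  shows "set xs \<subseteq> \<Union>F"
proof
  fix y assume "y \<in> set xs"
  then obtain i where i: "i < length xs" "xs ! i = y" by (meson in_set_conv_nth)
  show "y \<in> \<Union>F"
  proof (cases "Suc i < length xs")
    case True
    then have "{xs ! i, xs ! Suc i} \<in> F" using assms unfolding walk_def by blast
    then show ?thesis using i by blast
  next
    case False
    then have "Suc (i - 1) = i" "i < length xs" using i assms by auto
    then have "{xs ! (i - 1), xs ! i} \<in> F" using assms unfolding walk_def by metis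
    then show ?thesis using i by blast
  qed
qed

lemma finite_Union_edges: "finite F \<Longrightarrow> \<forall>e\<in>F. card e = 2 \<Longrightarrow> finite (\<Union>F)"
  by (metis card_eq_0_iff finite_Union zero_neq_numeral)

lemma card_2_ex_other: "card e = 2 \<Longrightarrow> x \<in> e \<Longrightarrow> \<exists>y. e = {x, y} \<and> y \<noteq> x"
  by (auto simp: card_2_iff)

lemma has_cycle_if_chord_from_hd:
  assumes "walk F xs" "distinct xs" "{hd xs, y} \<in> F"
    and "y \<in> set xs" "y \<noteq> hd xs" "y \<noteq> xs ! 1"
  shows "has_cycle F"
proof -
  obtain j where j: "j < length xs" "xs ! j = y" using assms(4) by (meson in_set_conv_nth)
  have xs_ne: "xs \<noteq> []" using assms(1) unfolding walk_def by simp
  then have "2 \<le> j" using j assms(5,6) hd_conv_nth by (metis One_nat_def less_2_cases not_less)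
  define ys where "ys = take (Suc j) xs"
  have "walk F ys" "distinct ys"
    using walk_take[OF assms(1)] assms(2) by (simp_all add: ys_def)
  moreover have "3 \<le> length ys" "hd ys = hd xs" "last ys = y"
    using j \<open>2 \<le> j\<close> xs_ne by (simp_all add: ys_def take_Suc_conv_app_nth hd_take)
  ultimately show ?thesis unfolding has_cycle_def using assms(3) by (metis insert_commute)
qed

lemma forest_has_leaf:
  assumes fin: "finite F" and two: "\<forall>e\<in>F. card e = 2" and "F \<noteq> {}"
    and acyclic: "\<not> has_cycle F"
  shows "\<exists>v e. e \<in> F \<and> v \<in> e \<and> {e'\<in>F. v \<in> e'} = {e}"
proof -
  define path_len where
    "path_len n \<longleftrightarrow> (\<exists>xs. walk F xs \<and> distinct xs \<and> 2 \<le> length xs \<and> length xs = n)" for n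
  obtain e0 where "e0 \<in> F" using \<open>F \<noteq> {}\<close> by blast
  then obtain a b where ab: "{a, b} \<in> F" "a \<noteq> b" using two by (metis card_2_iff)
  then have "walk F [a, b]" unfolding walk_def by auto
  then have len2: "path_len 2" unfolding path_len_def using ab by (intro exI[of _ "[a, b]"]) auto
  have bounded: "\<forall>n. path_len n \<longrightarrow> n \<le> card (\<Union>F)"
  proof (intro allI impI)
    fix n assume "path_len n"
    obtain xs where xs: "walk F xs" "distinct xs" "2 \<le> length xs" "length xs = n"
      using \<open>path_len n\<close> unfolding path_len_def by blast
    have "card (set xs) \<le> card (\<Union>F)"
      using set_walk_subset_Union[OF xs(1,3)] finite_Union_edges[OF fin two] by (rule card_mono[rotated])
    then show "n \<le> card (\<Union>F)" using xs by (simp add: distinct_card)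
  qed
  obtain m where "path_len m" and longest: "\<forall>n. path_len n \<longrightarrow> n \<le> m"
    using Nat.ex_has_greatest_nat[OF len2 bounded] by blast
  then obtain xs where xs: "walk F xs" "distinct xs" "2 \<le> length xs" "length xs = m"
    unfolding path_len_def by blast
  define e where "e = {xs ! 0, xs ! 1}"
  have "e \<in> F" using xs unfolding walk_def e_def by auto
  have hd_xs: "hd xs = xs ! 0" using xs(3) by (cases xs) auto
  have "e' = e" if e': "e' \<in> F" "hd xs \<in> e'" for e'
  proof -
    obtain y where y: "e' = {hd xs, y}" "y \<noteq> hd xs"
      using two e' card_2_ex_other by meson
    have "{y, hd xs} \<in> F" using e'(1) y(1) by (simp add: insert_commute)
    have "y \<in> set xs"
    proof (rule ccontr)
      assume "y \<notin> set xs"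
      then have "path_len (Suc m)"
        unfolding path_len_def using walk_Cons[OF xs(1) \<open>{y, hd xs} \<in> F\<close>] xs(2-4)
        by (intro exI[of _ "y # xs"]) simp
      then show False using longest by fastforce
    qed
    have "y = xs ! 1"
    proof (rule ccontr)
      assume "y \<noteq> xs ! 1"
      then have "has_cycle F"
        using has_cycle_if_chord_from_hd[OF xs(1,2)] e' y \<open>y \<in> set xs\<close> by simp
      then show False using acyclic by simp
    qed
    then show ?thesis using y hd_xs e_def by simp
  qed
  moreover have "hd xs \<in> e" using hd_xs e_def by simp
  ultimately have "{e'\<in>F. hd xs \<in> e'} = {e}" using \<open>e \<in> F\<close> by blast
  then show ?thesis using \<open>e \<in> F\<close> \<open>hd xs \<in> e\<close> by blast
qed

lemma card_forest_le_card_Union: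
  assumes "finite F" "\<forall>e\<in>F. card e = 2" "\<not> has_cycle F"
  shows "card F \<le> card (\<Union>F)"
  using assms
proof (induction "card F" arbitrary: F rule: less_induct)
  case less
  show ?case
  proof (cases "F = {}")
    case False
    then obtain v e where leaf: "e \<in> F" "v \<in> e" "{e'\<in>F. v \<in> e'} = {e}"
      using forest_has_leaf[OF less.prems(1,2) False less.prems(3)] by blast
    have fin_Union: "finite (\<Union>F)" using finite_Union_edges less.prems(1,2) .
    have "card (F - {e}) \<le> card (\<Union>(F - {e}))"
    proof (rule less.hyps)
      show "card (F - {e}) < card F" using less.prems(1) leaf(1) by (rule card_Diff1_less)
      show "\<not> has_cycle (F - {e})" using less.prems(3) has_cycle_mono by blast
    qed (use less.prems in auto)
    also have "\<dots> \<le> card (\<Union>F - {v})"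
      using leaf(3) fin_Union by (intro card_mono) blast+
    also have "\<dots> = card (\<Union>F) - 1"
      using leaf(1,2) by (intro card_Diff_singleton) blast
    finally have "card F - 1 \<le> card (\<Union>F) - 1"
      using leaf(1) by (simp add: card_Diff_singleton)
    moreover have "0 < card (\<Union>F)" using fin_Union leaf(1,2) card_gt_0_iff by blast
    ultimately show ?thesis by arith
  qed simp
qed

lemma sum_deg_eq:
  assumes "finite F" "\<forall>e\<in>F. card e = 2"
  shows "(\<Sum>v\<in>\<Union>F. deg F v) = 2 * card F"
proof -
  have "(\<Sum>v\<in>\<Union>F. deg F v) = (\<Sum>v\<in>\<Union>F. \<Sum>e\<in>F. if v \<in> e then 1 else 0)"
    unfolding deg_def using assms(1)
    by (auto simp: sum.If_cases intro!: sum.cong arg_cong[where f=card])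
  also have "\<dots> = (\<Sum>e\<in>F. \<Sum>v\<in>\<Union>F. if v \<in> e then 1 else 0)"
    by (rule sum.swap)
  also have "\<dots> = (\<Sum>e\<in>F. card e)"
  proof (rule sum.cong)
    fix e assume "e \<in> F"
    then have "\<Union>F \<inter> e = e" by blast
    then show "(\<Sum>v\<in>\<Union>F. if v \<in> e then 1 else 0) = card e"
      using finite_Union_edges[OF assms] by (simp add: sum.If_cases)
  qed simp
  finally show ?thesis using assms by simp
qed

lemma deg_pos: "finite F \<Longrightarrow> v \<in> \<Union>F \<Longrightarrow> 0 < deg F v"
  unfolding deg_def by (subst card_gt_0_iff) auto

lemma card_high_deg_le_card_leaves:
  fixes s :: real
  assumes fin: "finite F" and two: "\<forall>e\<in>F. card e = 2" and "\<not> has_cycle F" and "2 \<le> s"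
  shows "real (card {v\<in>\<Union>F. s < deg F v}) * (s - 2) \<le> card {v\<in>\<Union>F. deg F v = 1}"
proof -
  define U where "U = \<Union>F"
  define L where "L = {v\<in>U. deg F v = 1}"
  define excess where "excess v = real (deg F v) - 2 + (if v \<in> L then 1 else 0)" for v
  have "finite U" unfolding U_def using fin two by (rule finite_Union_edges)
  have excess_nonneg: "0 \<le> excess v" if "v \<in> U" for v
    using deg_pos[OF fin, of v] that unfolding excess_def L_def U_def by auto
  have "(\<Sum>v\<in>U. excess v) = real (\<Sum>v\<in>U. deg F v) - 2 * real (card U) + real (card L)"
    using \<open>finite U\<close> unfolding excess_def L_def
    by (simp add: sum.distrib sum_subtractf sum.If_cases Int_absorb1 Collect_conj_eq)
  also have "\<dots> = 2 * real (card F) - 2 * real (card U) + real (card L)"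
    unfolding U_def sum_deg_eq[OF fin two] by simp
  also have "\<dots> \<le> real (card L)"
    using card_forest_le_card_Union[OF assms(1-3)] unfolding U_def by simp
  finally have sum_excess: "(\<Sum>v\<in>U. excess v) \<le> real (card L)" .
  have "real (card {v\<in>U. s < deg F v}) * (s - 2) = (\<Sum>v\<in>{v\<in>U. s < deg F v}. s - 2)"
    by simp
  also have "\<dots> \<le> (\<Sum>v\<in>{v\<in>U. s < deg F v}. excess v)"
    using \<open>2 \<le> s\<close> unfolding excess_def L_def by (intro sum_mono) auto
  also have "\<dots> \<le> (\<Sum>v\<in>U. excess v)"
    using \<open>finite U\<close> excess_nonneg by (intro sum_mono2) auto
  finally show ?thesis using sum_excess unfolding U_def L_def by linarith
qed

definition trunk_edges :: "'a set \<Rightarrow> 'a set \<times> 'a set set \<Rightarrow> 'a set set" where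
  "trunk_edges S T = {e\<in>snd T. e \<subseteq> trunk S T}"

lemma pdeg_eq_deg_trunk_edges: "pdeg S T v = deg (trunk_edges S T) v"
  unfolding pdeg_def deg_def trunk_edges_def by (rule arg_cong[where f=card]) blast

lemma two_le_deg_trunk_edges:
  assumes fin: "finite (snd T)" and "v \<in> trunk S T" and "v \<notin> S"
  shows "2 \<le> deg (trunk_edges S T) v"
proof -
  obtain u x xs where ux: "u \<in> S" "x \<in> S" "u \<in> fst T" "x \<in> fst T"
    and xs: "walk (snd T) xs" "distinct xs" "hd xs = u" "last xs = x" "v \<in> set xs"
    using \<open>v \<in> trunk S T\<close> unfolding trunk_def by blast
  obtain i where i: "i < length xs" "xs ! i = v" using xs(5) by (meson in_set_conv_nth)
  have "xs \<noteq> []" using xs(1) unfolding walk_def by simp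
  then have "i \<noteq> 0" "i \<noteq> length xs - 1"
    using i xs(3,4) ux(1,2) \<open>v \<notin> S\<close> hd_conv_nth last_conv_nth by metis+
  then have inner: "Suc (i - 1) = i" "Suc i < length xs" using i(1) by auto
  define e1 where "e1 = {xs ! (i - 1), xs ! i}"
  define e2 where "e2 = {xs ! i, xs ! Suc i}"
  have "e1 \<in> snd T" "e2 \<in> snd T"
    using xs(1) inner unfolding walk_def e1_def e2_def by (metis lessI less_trans)+
  moreover have "set xs \<subseteq> trunk S T" unfolding trunk_def using ux xs(1-4) by blast
  then have "e1 \<subseteq> trunk S T" "e2 \<subseteq> trunk S T"
    unfolding e1_def e2_def using inner by auto
  moreover have "e1 \<noteq> e2"
  proof -
    have "xs ! (i - 1) \<noteq> xs ! i" "xs ! (i - 1) \<noteq> xs ! Suc i"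
      using xs(2) inner by (simp_all add: nth_eq_iff_index_eq)
    then show ?thesis unfolding e1_def e2_def by blast
  qed
  ultimately have "{e1, e2} \<subseteq> {e\<in>trunk_edges S T. v \<in> e}"
    unfolding trunk_edges_def e1_def e2_def using i by auto
  moreover have "finite {e\<in>trunk_edges S T. v \<in> e}"
    using fin unfolding trunk_edges_def by simp
  ultimately have "card {e1, e2} \<le> deg (trunk_edges S T) v"
    unfolding deg_def by (rule card_mono[rotated])
  then show ?thesis using \<open>e1 \<noteq> e2\<close> by simp
qed

lemma wgraph_finite_edges: "wgraph V E w \<Longrightarrow> finite E"
  unfolding wgraph_def by (metis Pow_iff finite_Pow_iff finite_subset subsetI)

lemma card_high_pdeg_le:
  fixes s :: real
  assumes G: "wgraph V E w" and T: "subtree_of V E T" and "2 \<le> s"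
  shows "real (card {v\<in>V. s < pdeg S T v}) * (s - 2) \<le> card (S \<inter> fst T)"
proof -
  define H where "H = trunk_edges S T"
  have "finite (snd T)" "finite (fst T)"
    using T wgraph_finite_edges[OF G] G
    unfolding subtree_of_def wgraph_def by (auto intro: finite_subset)
  have "snd T \<subseteq> E" using T unfolding subtree_of_def by simp
  have H: "finite H" "\<forall>e\<in>H. card e = 2" "\<not> has_cycle H"
    using \<open>finite (snd T)\<close> \<open>snd T \<subseteq> E\<close> G T has_cycle_mono[of H "snd T"]
    unfolding H_def trunk_edges_def wgraph_def subtree_of_def by auto
  have "{v\<in>V. s < pdeg S T v} \<subseteq> {v\<in>\<Union>H. s < deg H v}"
  proof -
    have "deg H v = 0" if "v \<notin> \<Union>H" for v
    proof -
      have "{e\<in>H. v \<in> e} = {}" using that by blast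
      then show ?thesis unfolding deg_def by (simp only: card.empty)
    qed
    then show ?thesis unfolding pdeg_eq_deg_trunk_edges H_def using \<open>2 \<le> s\<close> by force
  qed
  then have "card {v\<in>V. s < pdeg S T v} \<le> card {v\<in>\<Union>H. s < deg H v}"
    by (rule card_mono[OF finite_subset[OF _ finite_Union_edges[OF H(1,2)]], rotated]) blast
  then have "real (card {v\<in>V. s < pdeg S T v}) * (s - 2)
      \<le> real (card {v\<in>\<Union>H. s < deg H v}) * (s - 2)"
    using \<open>2 \<le> s\<close> by (intro mult_right_mono) simp_all
  also have "\<dots> \<le> card {v\<in>\<Union>H. deg H v = 1}"
    by (rule card_high_deg_le_card_leaves[OF H \<open>2 \<le> s\<close>])
  also have "\<dots> \<le> card (S \<inter> fst T)"
  proof -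
    have "\<Union>H \<subseteq> trunk S T \<inter> fst T"
      using T unfolding H_def trunk_edges_def subtree_of_def by auto
    then have "{v\<in>\<Union>H. deg H v = 1} \<subseteq> S \<inter> fst T"
      using two_le_deg_trunk_edges[OF \<open>finite (snd T)\<close>] unfolding H_def by fastforce
    then show ?thesis using \<open>finite (fst T)\<close> by (simp add: card_mono)
  qed
  finally show ?thesis .
qed

lemma sum_card_Int_eq_sum_card_Collect:
  assumes "finite R" "finite U"
  shows "(\<Sum>r\<in>R. card (U \<inter> f r)) = (\<Sum>u\<in>U. card {r\<in>R. u \<in> f r})"
proof -
  have "(\<Sum>r\<in>R. card (U \<inter> f r)) = (\<Sum>r\<in>R. \<Sum>u\<in>U. if u \<in> f r then 1 else 0)"
    using assms by (auto simp: sum.If_cases intro!: sum.cong arg_cong[where f=card])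
  also have "\<dots> = (\<Sum>u\<in>U. \<Sum>r\<in>R. if u \<in> f r then 1 else 0)"
    by (rule sum.swap)
  also have "\<dots> = (\<Sum>u\<in>U. card {r\<in>R. u \<in> f r})"
    using assms by (auto simp: sum.If_cases intro!: sum.cong arg_cong[where f=card])
  finally show ?thesis .
qed

lemma card_Hi_mult_le:
  fixes s K :: real
  assumes G: "wgraph V E w" and "S \<subseteq> V" and trees: "\<forall>r\<in>S. subtree_of V E (T r)"
    and load: "\<forall>v\<in>V. real (card {r\<in>S. v \<in> fst (T r)}) \<le> K" and "2 \<le> s"
  shows "real (card (Hi V S T s)) * (s - 2) \<le> real (card S) * K"
proof -
  define A where "A r = {v\<in>V. s < pdeg S (T r) v}" for r
  have "finite S" using G \<open>S \<subseteq> V\<close> unfolding wgraph_def by (auto intro: finite_subset)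
  have "Hi V S T s = (\<Union>r\<in>S. A r)" unfolding Hi_def A_def by auto
  then have "real (card (Hi V S T s)) \<le> (\<Sum>r\<in>S. real (card (A r)))"
    using \<open>finite S\<close> card_UN_le[of S A] by (simp flip: of_nat_sum)
  then have "real (card (Hi V S T s)) * (s - 2) \<le> (\<Sum>r\<in>S. real (card (A r))) * (s - 2)"
    using \<open>2 \<le> s\<close> by (intro mult_right_mono) simp_all
  also have "\<dots> = (\<Sum>r\<in>S. real (card (A r)) * (s - 2))"
    by (rule sum_distrib_right)
  also have "\<dots> \<le> (\<Sum>r\<in>S. real (card (S \<inter> fst (T r))))"
    using card_high_pdeg_le[OF G _ \<open>2 \<le> s\<close>] trees unfolding A_def by (intro sum_mono) auto
  also have "\<dots> = (\<Sum>u\<in>S. real (card {r\<in>S. u \<in> fst (T r)}))"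
    using sum_card_Int_eq_sum_card_Collect[OF \<open>finite S\<close> \<open>finite S\<close>]
    by (simp flip: of_nat_sum)
  also have "\<dots> \<le> (\<Sum>u\<in>S. K)"
    using load \<open>S \<subseteq> V\<close> by (intro sum_mono) auto
  finally show ?thesis by simp
qed

lemma ln_3_ge: "1 + 1/16 \<le> ln (3::real)"
proof -
  have "ln (exp 1 / 3) \<le> exp 1 / 3 - (1::real)" by (rule ln_le_minus_one) simp
  then have "1 - ln 3 \<le> exp 1 / 3 - (1::real)" by (simp add: ln_div)
  then show ?thesis using e_less_272 by linarith
qed

lemma powr_inverse_ln: "1 < x \<Longrightarrow> x powr (1 / ln x) = exp (1::real)"
  using ln_gt_zero[of x] by (simp add: powr_def)

lemma four_le_powr:
  fixes d c :: real
  assumes "2 \<le> d" "1 \<le> c"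
  shows "4 \<le> d powr (c + 1)"
proof -
  have "2 powr 2 \<le> 2 powr (c + 1)" using assms(2) by (intro powr_mono) auto
  also have "\<dots> \<le> d powr (c + 1)" using assms by (intro powr_mono2) auto
  finally show ?thesis by simp
qed

lemma tree_cover_load_le_threshold:
  fixes k D :: real
  assumes "1 + 1/16 \<le> k" "4 \<le> D"
  shows "2 * D * (k * exp 1 * (k + 1)) \<le> 4 * exp 1 * D * k\<^sup>2 - 1"
proof -
  have "16 * (1/16) \<le> (2 * exp 1 * D) * (k * (k - 1))"
  proof (rule mult_mono)
    have "4 * 4 \<le> (2 * exp 1) * D"
      using exp_ge_add_one_self[of 1] assms(2) by (intro mult_mono) auto
    then show "16 \<le> 2 * exp 1 * D" by simp
    have "1 * (1/16) \<le> k * (k - 1)" using assms(1) by (intro mult_mono) auto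
    then show "1/16 \<le> k * (k - 1)" by simp
  qed (use assms in auto)
  then show ?thesis by (simp add: algebra_simps power2_eq_square)
qed

lemma le_divide_if_mult_le_mult:
  fixes x y a b K :: real
  assumes "x * a \<le> y * K" and "b * K \<le> a" and "0 < b" "0 < K" "0 \<le> y"
  shows "x \<le> y / b"
proof -
  have "x * b * a = x * a * b" by simp
  also have "\<dots> \<le> y * K * b" using assms(1) by (rule mult_right_mono) (use assms(3) in simp)
  also have "\<dots> \<le> y * a" using mult_left_mono[OF assms(2,5)] by (simp add: algebra_simps)
  finally have "x * b \<le> y"
    by (rule mult_right_le_imp_le) (use assms(2-4) in \<open>smt (verit) mult_pos_pos\<close>)
  then show ?thesis using assms(3) by (simp add: pos_le_divide_eq)
qed

theorem lemma2p4:
  fixes V :: "'a set" and E :: "'a set set" and w :: "'a set \<Rightarrow> real"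
    and S :: "'a set" and T :: "'a \<Rightarrow> 'a set \<times> 'a set set"
    and d :: nat and c :: real
  assumes "wgraph V E w" and "connected_on V E" and "card V \<ge> 3"
    and "d \<ge> 2" and "c \<ge> 1"
    and "S \<subseteq> V"
    and "restricted_tree_cover V E w S T"
  shows "real (card (Hi V S T (4 * exp 1 * real d powr (c + 1) * (ln (real (card V)))\<^sup>2 + 1)))
           \<le> real (card S) / (2 * real d powr (c + 1))"
proof -
  define k where "k = ln (real (card V))"
  define D where "D = real d powr (c + 1)"
  define s where "s = 4 * exp 1 * D * k\<^sup>2 + 1"
  define K where "K = k * exp 1 * (k + 1)"
  have "ln 3 \<le> k" using assms(3) unfolding k_def by simp
  then have "1 + 1/16 \<le> k" using ln_3_ge by linarith
  have "4 \<le> D" using four_le_powr assms(4,5) unfolding D_def by simp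
  have trees: "\<forall>r\<in>S. subtree_of V E (T r)" and load: "\<forall>v\<in>V. real (card {r\<in>S. v \<in> fst (T r)}) \<le> K"
    using assms(3,7) powr_inverse_ln[of "real (card V)"]
    unfolding restricted_tree_cover_def Let_def K_def k_def by auto
  have threshold: "2 * D * K \<le> s - 2"
    using tree_cover_load_le_threshold[OF \<open>1 + 1/16 \<le> k\<close> \<open>4 \<le> D\<close>] unfolding s_def K_def by simp
  have "0 < K" using \<open>1 + 1/16 \<le> k\<close> unfolding K_def by simp
  then have "2 \<le> s" using threshold \<open>4 \<le> D\<close> by (smt (verit) mult_pos_pos)
  have "real (card (Hi V S T s)) * (s - 2) \<le> real (card S) * K"
    using card_Hi_mult_le[OF assms(1,6) trees load \<open>2 \<le> s\<close>] .
  then have "real (card (Hi V S T s)) \<le> real (card S) / (2 * D)"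
    using threshold \<open>4 \<le> D\<close> \<open>0 < K\<close> by (intro le_divide_if_mult_le_mult) simp_all
  then show ?thesis unfolding s_def D_def k_def .
qed

end
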